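(* Let $\mathcal{M}=\{p(x\mid\theta):\ x\in\mathcal{X}\subseteq\mathbb{R}^n,\ \theta\in\Theta\subseteq\mathbb{R}^d\}$ be a model, $\mathcal{P}$ a class of priors, $\mathbf{X}=(x_1,\dots,x_M)$ data and $\gamma>0$. Then empirical reference priors are invariant under transformations of $\theta$ and $x$ in the following sense: (i) for every diffeomorphism $\varphi\colon\Theta\to\tilde\Theta$, $\pi_{\rm er}(\cdot\mid\mathcal{M}_\varphi,\mathcal{P}_\varphi,\mathbf{X},\gamma)=\varphi_\ast\pi_{\rm er}(\cdot\mid\mathcal{M},\mathcal{P},\mathbf{X},\gamma)$, i.e. $\pi$ is an empirical reference prior for $(\mathcal{M},\mathcal{P},\mathbf{X},\gamma)$ if and only if $\varphi_\ast\pi$ is an empirical reference prior for $(\mathcal{M}_\varphi,\mathcal{P}_\varphi,\mathbf{X},\gamma)$; (ii) for every diffeomorphism $\psi\colon\mathcal{X}\to\tilde{\mathcal{X}}$, $\pi_{\rm er}(\cdot\mid\mathcal{M}_\psi,\mathcal{P},\mathbf{X}_\psi,\gamma)=\pi_{\rm er}(\cdot\mid\mathcal{M},\mathcal{P},\mathbf{X},\gamma)$, i.e. $\pi$ is an empirical reference prior for $(\mathcal{M},\mathcal{P},\mathbf{X},\gamma)$ if and only if it is one for $(\mathcal{M}_\psi,\mathcal{P},\mathbf{X}_\psi,\gamma)$.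
   Context: For a prior $\pi$ put $p(x\mid\pi)=\int_\Theta p(x\mid\theta)\pi(\theta)\,\mathrm d\theta$ and marginal likelihood $L(\pi)=L(\pi\mid\mathcal{M},\mathbf{X})=\prod_{m=1}^M p(x_m\mid\pi)$. For $k\in\mathbb{N}$, $\mathcal{M}^k$ is the model of $k$ independent replications: $p(\vec x\mid\theta)=\prod_{i=1}^k p(x^{(i)}\mid\theta)$, $\vec x\in\mathcal{X}^k$. The expected information of a model $\mathcal{N}=\{p(y\mid\theta)\}$ is $\mathcal{I}[\pi\mid\mathcal{N}]=\int\int\pi(\theta)p(y\mid\theta)\log\big(p(y\mid\theta)/p(y\mid\pi)\big)\,\mathrm dy\,\mathrm d\theta$. A function $\pi\in\mathcal{P}$ has the $\mathrm{MMI}(\mathbf{X})$ property for $(\mathcal{M},\mathcal{P},\mathbf{X},\gamma)$ if $\pi$ is a proper probability density and for every proper probability density $\tilde\pi\in\mathcal{P}$, $\lim_{k\to\infty}\big((\log L(\pi)+\gamma\mathcal{I}[\pi\mid\mathcal{M}^k])-(\log L(\tilde\pi)+\gamma\mathcal{I}[\tilde\pi\mid\mathcal{M}^k])\big)\ge 0$. An empirical reference prior $\pi_{\rm er}(\cdot\mid\mathcal{M},\mathcal{P},\mathbf{X},\gamma)$ is a probability density having this property. Transformations: $\varphi_\ast,\psi_\ast$ denote pushforwards; $\mathcal{M}_\varphi$ is given by $p(x\mid\tilde\theta)=p(x\mid\varphi^{-1}(\tilde\theta))$; $\mathcal{P}_\varphi=\{\varphi_\ast\pi:\pi\in\mathcal{P}\}$;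 $\mathcal{M}_\psi$ is given by $p(\tilde x\mid\theta)=|\det(\psi^{-1})'(\tilde x)|\,p(\psi^{-1}(\tilde x)\mid\theta)$; $\mathbf{X}_\psi=(\psi(x_1),\dots,\psi(x_M))$. *)

theory Defs
  imports "HOL-Analysis.Analysis"
begin

text \<open>Priors are real-valued functions on real^'d (vanishing outside \<Theta>).\<close>

definition is_model :: "(real^'n) set \<Rightarrow> (real^'d) set \<Rightarrow> (real^'n \<Rightarrow> real^'d \<Rightarrow> real) \<Rightarrow> bool" where
  "is_model X \<Theta> p \<longleftrightarrow>
     (\<lambda>(x, \<theta>). p x \<theta>) \<in> borel_measurable (lebesgue_on X \<Otimes>\<^sub>M lebesgue_on \<Theta>) \<and>
     (\<forall>\<theta>\<in>\<Theta>. (\<forall>x\<in>X. 0 \<le> p x \<theta>) \<and> integrable (lebesgue_on X) (\<lambda>x. p x \<theta>)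
            \<and> (\<integral>x. p x \<theta> \<partial>lebesgue_on X) = 1)"

definition proper_density :: "(real^'d) set \<Rightarrow> (real^'d \<Rightarrow> real) \<Rightarrow> bool" where
  "proper_density \<Theta> \<pi> \<longleftrightarrow>
     (\<forall>\<theta>\<in>\<Theta>. 0 \<le> \<pi> \<theta>) \<and> integrable (lebesgue_on \<Theta>) \<pi> \<and> (\<integral>\<theta>. \<pi> \<theta> \<partial>lebesgue_on \<Theta>) = 1"

definition pmarg :: "(real^'d) set \<Rightarrow> ('y \<Rightarrow> real^'d \<Rightarrow> real) \<Rightarrow> (real^'d \<Rightarrow> real) \<Rightarrow> 'y \<Rightarrow> real" where
  "pmarg \<Theta> q \<pi> y = (\<integral>\<theta>. q y \<theta> * \<pi> \<theta> \<partial>lebesgue_on \<Theta>)"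

definition marg_lik :: "(real^'d) set \<Rightarrow> (real^'n \<Rightarrow> real^'d \<Rightarrow> real) \<Rightarrow> (real^'d \<Rightarrow> real) \<Rightarrow> (real^'n) list \<Rightarrow> real" where
  "marg_lik \<Theta> p \<pi> xs = prod_list (map (pmarg \<Theta> p \<pi>) xs)"

definition log_marg_lik :: "(real^'d) set \<Rightarrow> (real^'n \<Rightarrow> real^'d \<Rightarrow> real) \<Rightarrow> (real^'d \<Rightarrow> real) \<Rightarrow> (real^'n) list \<Rightarrow> ereal" where
  "log_marg_lik \<Theta> p \<pi> xs =
     (if 0 < marg_lik \<Theta> p \<pi> xs then ereal (ln (marg_lik \<Theta> p \<pi> xs)) else -\<infinity>)"

text \<open>Model M^k of k independent replications: p(xv | \<theta>) = \<Prod>_{i<k} p(xv i | \<theta>),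
  xv ranging over X^k (the product measure space).\<close>
definition rep_model :: "nat \<Rightarrow> ('x \<Rightarrow> real^'d \<Rightarrow> real) \<Rightarrow> (nat \<Rightarrow> 'x) \<Rightarrow> real^'d \<Rightarrow> real" where
  "rep_model k p xv \<theta> = (\<Prod>i<k. p (xv i) \<theta>)"

definition rep_space :: "nat \<Rightarrow> 'a measure \<Rightarrow> (nat \<Rightarrow> 'a) measure" where
  "rep_space k Y = PiM {..<k} (\<lambda>_. Y)"

definition exp_info :: "'y measure \<Rightarrow> (real^'d) set \<Rightarrow> ('y \<Rightarrow> real^'d \<Rightarrow> real) \<Rightarrow> (real^'d \<Rightarrow> real) \<Rightarrow> real" where
  "exp_info Y \<Theta> q \<pi> =
     (\<integral>\<theta>. (\<integral>y. \<pi> \<theta> * q y \<theta> * ln (q y \<theta> / pmarg \<Theta> q \<pi> y) \<partial>Y) \<partial>lebesgue_on \<Theta>)"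

definition mmi_objective :: "(real^'n) set \<Rightarrow> (real^'d) set \<Rightarrow> (real^'n \<Rightarrow> real^'d \<Rightarrow> real)
     \<Rightarrow> (real^'n) list \<Rightarrow> real \<Rightarrow> nat \<Rightarrow> (real^'d \<Rightarrow> real) \<Rightarrow> ereal" where
  "mmi_objective X \<Theta> p xs \<gamma> k \<pi> =
     log_marg_lik \<Theta> p \<pi> xs + ereal (\<gamma> * exp_info (rep_space k (lebesgue_on X)) \<Theta> (rep_model k p) \<pi>)"

text \<open>MMI(X) property = being an empirical reference prior for (M, P, X, \<gamma>).
  "lim_{k\<to>\<infinity>} (...) \<ge> 0" is read as: the limit exists (in the extended reals) and is \<ge> 0.\<close>
definition emp_ref_prior :: "(real^'n) set \<Rightarrow> (real^'d) set \<Rightarrow> (real^'n \<Rightarrow> real^'d \<Rightarrow> real)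
     \<Rightarrow> (real^'d \<Rightarrow> real) set \<Rightarrow> (real^'n) list \<Rightarrow> real \<Rightarrow> (real^'d \<Rightarrow> real) \<Rightarrow> bool" where
  "emp_ref_prior X \<Theta> p P xs \<gamma> \<pi> \<longleftrightarrow>
     \<pi> \<in> P \<and> proper_density \<Theta> \<pi> \<and>
     (\<forall>\<pi>'\<in>P. proper_density \<Theta> \<pi>' \<longrightarrow>
        (\<exists>l\<ge>0. ((\<lambda>k. mmi_objective X \<Theta> p xs \<gamma> k \<pi> - mmi_objective X \<Theta> p xs \<gamma> k \<pi>')
                   \<longlongrightarrow> l) sequentially))"

definition diffeo_on :: "(real^'m \<Rightarrow> real^'m) \<Rightarrow> (real^'m) set \<Rightarrow> (real^'m) set \<Rightarrow> bool" where
  "diffeo_on f A B \<longleftrightarrow> open A \<and> open B \<and> bij_betw f A B \<and>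
     (\<forall>x\<in>A. f differentiable (at x)) \<and> (\<forall>y\<in>B. inv_into A f differentiable (at y)) \<and>
     continuous_on A (\<lambda>x. matrix (frechet_derivative f (at x))) \<and>
     continuous_on B (\<lambda>y. matrix (frechet_derivative (inv_into A f) (at y)))"

definition inv_jac :: "(real^'m \<Rightarrow> real^'m) \<Rightarrow> (real^'m) set \<Rightarrow> real^'m \<Rightarrow> real" where
  "inv_jac f A y = \<bar>det (matrix (frechet_derivative (inv_into A f) (at y)))\<bar>"

definition push_density :: "(real^'d \<Rightarrow> real^'d) \<Rightarrow> (real^'d) set \<Rightarrow> (real^'d \<Rightarrow> real) \<Rightarrow> real^'d \<Rightarrow> real" where
  "push_density \<phi> \<Theta> \<pi> y = (if y \<in> \<phi> ` \<Theta> then \<pi> (inv_into \<Theta> \<phi> y) * inv_jac \<phi> \<Theta> y else 0)"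

definition param_transform :: "(real^'d \<Rightarrow> real^'d) \<Rightarrow> (real^'d) set \<Rightarrow> (real^'n \<Rightarrow> real^'d \<Rightarrow> real) \<Rightarrow> real^'n \<Rightarrow> real^'d \<Rightarrow> real" where
  "param_transform \<phi> \<Theta> p x \<theta>' = p x (inv_into \<Theta> \<phi> \<theta>')"

definition data_transform :: "(real^'n \<Rightarrow> real^'n) \<Rightarrow> (real^'n) set \<Rightarrow> (real^'n \<Rightarrow> real^'d \<Rightarrow> real) \<Rightarrow> real^'n \<Rightarrow> real^'d \<Rightarrow> real" where
  "data_transform \<psi> X p x' \<theta> = inv_jac \<psi> X x' * p (inv_into X \<psi> x') \<theta>"

end

theory Submission
  imports Defs
begin

text \<open>A reparametrisation \<open>\<theta> \<mapsto> \<phi> \<theta>\<close>, applied together with the pushforward of the priors,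
  leaves every marginal \<open>p(y | \<pi>)\<close> and the expected information unchanged: each is a
  \<open>\<theta>\<close>-integral, and the Jacobian of the pushforward is absorbed by the change of variables.
  So the MMI objective itself is invariant. A transformation \<open>x \<mapsto> \<psi> x\<close> of the data multiplies
  each \<open>p(x\<^sub>m | \<pi>)\<close> by the Jacobian factor at \<open>x\<^sub>m\<close>, which does not depend on \<open>\<pi>\<close>, so
  \<open>log L\<close> shifts by a constant; the expected information of \<open>M\<^sup>k\<close> is unchanged because the
  Jacobian cancels in the ratio \<open>p(y | \<theta>) / p(y | \<pi>)\<close> and is absorbed by the componentwise
  change of variables on \<open>X\<^sup>k\<close>. Differences of objectives, and with them the MMI property,
  are therefore preserved.\<close>

section \<open>Change of variables over an arbitrary finite index type\<close>

text \<open>The library's change of variables theorem requires a well-ordered index type.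
  \<open>'a wo\<close> is a copy of a finite type \<open>'a\<close> carrying such an order, and \<open>reindex_vec\<close>
  transports integrals between \<open>real^'a\<close> and \<open>real^'a wo\<close>.\<close>

typedef 'a wo = "UNIV :: 'a set" by simp

lemma bij_Rep_wo: "bij Rep_wo"
  by (metis Rep_wo_inverse Abs_wo_inverse UNIV_I bij_betw_byWitness subset_UNIV)

lemma card_wo: "CARD('a wo) = CARD('a)"
  using type_definition.card[OF type_definition_wo] by simp

instance wo :: (finite) finite
  by standard (metis finite finite_imageI type_definition.Abs_image type_definition_wo)

instantiation wo :: (finite) linorder
begin

definition less_eq_wo :: "'a wo \<Rightarrow> 'a wo \<Rightarrow> bool" where
  "x \<le> y \<longleftrightarrow> to_nat (Rep_wo x) \<le> to_nat (Rep_wo y)"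

definition less_wo :: "'a wo \<Rightarrow> 'a wo \<Rightarrow> bool" where
  "x < y \<longleftrightarrow> to_nat (Rep_wo x) < to_nat (Rep_wo y)"

instance
proof
  fix x y z :: "'a wo"
  show "(x < y) = (x \<le> y \<and> \<not> y \<le> x)" by (auto simp: less_eq_wo_def less_wo_def)
  show "x \<le> x" by (simp add: less_eq_wo_def)
  show "x \<le> y \<Longrightarrow> y \<le> z \<Longrightarrow> x \<le> z" by (simp add: less_eq_wo_def)
  show "x \<le> y \<Longrightarrow> y \<le> x \<Longrightarrow> x = y"
    by (simp add: less_eq_wo_def Rep_wo_inject[symmetric])
  show "x \<le> y \<or> y \<le> x" by (simp add: less_eq_wo_def) linarith
qed

end

instance wo :: (finite) wellorder
proof
  fix P :: "'a wo \<Rightarrow> bool" and a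
  assume step: "\<And>x. (\<And>y. y < x \<Longrightarrow> P y) \<Longrightarrow> P x"
  show "P a"
    by (induction a rule: measure_induct_rule[where f = "\<lambda>x. to_nat (Rep_wo x)"])
      (rule step, unfold less_wo_def, blast)
qed

definition reindex_vec :: "('b::finite \<Rightarrow> 'a::finite) \<Rightarrow> real^'a \<Rightarrow> real^'b" where
  "reindex_vec r x = (\<chi> i. x $ r i)"

lemma reindex_vec_nth [simp]: "reindex_vec r x $ i = x $ r i"
  by (simp add: reindex_vec_def)

lemma reindex_vec_inv_left [simp]: "bij r \<Longrightarrow> reindex_vec (inv r) (reindex_vec r x) = x"
  by (simp add: vec_eq_iff bij_def surj_f_inv_f inv_f_f)

lemma reindex_vec_inv_right [simp]: "bij r \<Longrightarrow> reindex_vec r (reindex_vec (inv r) y) = y"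
  by (simp add: vec_eq_iff bij_def surj_f_inv_f inv_f_f)

lemma bounded_linear_reindex_vec: "bounded_linear (reindex_vec r)"
  unfolding linear_conv_bounded_linear[symmetric] by (rule linearI) (simp_all add: vec_eq_iff)

lemma norm_reindex_vec:
  assumes "bij r" shows "norm (reindex_vec r x) = norm x"
proof -
  have "(\<Sum>i\<in>UNIV. (norm (x $ r i))\<^sup>2) = (\<Sum>j\<in>UNIV. (norm (x $ j))\<^sup>2)"
    using sum.reindex[of r UNIV "\<lambda>j. (norm (x $ j))\<^sup>2"] assms by (simp add: bij_def o_def)
  then show ?thesis by (simp add: norm_vec_def L2_set_def)
qed

lemma reindex_vec_ball:
  assumes r: "bij r" shows "reindex_vec r ` ball 0 B = ball 0 B"
proof
  show "reindex_vec r ` ball 0 B \<subseteq> ball 0 B"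
    using r by (auto simp: norm_reindex_vec)
  have "reindex_vec (inv r) ` ball 0 B \<subseteq> ball 0 B"
    using bij_imp_bij_inv[OF r] by (auto simp: norm_reindex_vec)
  then have "reindex_vec r ` reindex_vec (inv r) ` ball 0 B \<subseteq> reindex_vec r ` ball 0 B"
    by blast
  then show "ball 0 B \<subseteq> reindex_vec r ` ball 0 B"
    using r by (simp add: image_image)
qed

lemma reindex_vec_cbox:
  assumes r: "bij r" shows "reindex_vec r ` cbox u v = cbox (reindex_vec r u) (reindex_vec r v)"
proof
  show "reindex_vec r ` cbox u v \<subseteq> cbox (reindex_vec r u) (reindex_vec r v)"
    by (auto simp: mem_box_cart)
  show "cbox (reindex_vec r u) (reindex_vec r v) \<subseteq> reindex_vec r ` cbox u v"
  proof
    fix y assume y: "y \<in> cbox (reindex_vec r u) (reindex_vec r v)"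
    have "reindex_vec (inv r) y \<in> cbox u v"
      unfolding mem_box_cart
    proof
      fix i
      from y have "u $ r (inv r i) \<le> y $ inv r i \<and> y $ inv r i \<le> v $ r (inv r i)"
        by (simp add: mem_box_cart)
      then show "u $ i \<le> reindex_vec (inv r) y $ i \<and> reindex_vec (inv r) y $ i \<le> v $ i"
        using r by (simp add: bij_is_surj surj_f_inv_f)
    qed
    then show "y \<in> reindex_vec r ` cbox u v"
      using r by (metis image_eqI reindex_vec_inv_right)
  qed
qed

lemma content_reindex_vec_cbox:
  assumes r: "bij r"
  shows "Henstock_Kurzweil_Integration.content (reindex_vec r ` cbox u v) = Henstock_Kurzweil_Integration.content (cbox u v)"
proof -
  have "cbox (reindex_vec r u) (reindex_vec r v) = {} \<longleftrightarrow> cbox u v = {}"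
    using reindex_vec_cbox[OF r] by (metis image_is_empty)
  moreover have "(\<Prod>i\<in>UNIV. v $ r i - u $ r i) = (\<Prod>j\<in>UNIV. v $ j - u $ j)"
    using prod.reindex[of r UNIV "\<lambda>j. v $ j - u $ j"] r by (simp add: bij_def o_def)
  ultimately show ?thesis
    unfolding reindex_vec_cbox[OF r] content_cbox_if_cart by simp
qed

lemma has_integral_reindex_vec_cbox:
  fixes f :: "real^'a::finite \<Rightarrow> 'c::real_normed_vector"
  assumes r: "bij (r :: 'b::finite \<Rightarrow> 'a)" and f: "(f has_integral i) (cbox a b)"
  shows "((\<lambda>y. f (reindex_vec (inv r) y)) has_integral i) (cbox (reindex_vec r a) (reindex_vec r b))"
proof -
  have ir: "bij (inv r)" using r by (rule bij_imp_bij_inv)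
  have "((\<lambda>y. f (reindex_vec (inv r) y)) has_integral (1/1) *\<^sub>R i) (reindex_vec r ` cbox a b)"
  proof (rule has_integral_twiddle)
    show "continuous (at x) (reindex_vec (inv r))" for x
      by (simp add: bounded_linear_reindex_vec linear_continuous_at)
    show "\<exists>w z. reindex_vec (inv r) ` cbox u v = cbox w z" for u v
      using reindex_vec_cbox[OF ir] by blast
    show "\<exists>w z. reindex_vec r ` cbox u v = cbox w z" for u v
      using reindex_vec_cbox[OF r] by blast
    show "Henstock_Kurzweil_Integration.content (reindex_vec (inv r) ` cbox u v) = 1 * Henstock_Kurzweil_Integration.content (cbox u v)" for u v
      using content_reindex_vec_cbox[OF ir] by simp
  qed (use r f in auto)
  then show ?thesis using reindex_vec_cbox[OF r] by simp
qed

lemma has_integral_reindex_vec_UNIV: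
  fixes f :: "real^'a::finite \<Rightarrow> 'c::banach"
  assumes r: "bij (r :: 'b::finite \<Rightarrow> 'a)" and f: "(f has_integral i) UNIV"
  shows "((\<lambda>y. f (reindex_vec (inv r) y)) has_integral i) UNIV"
proof -
  let ?T = "reindex_vec (inv r)"
  have ir: "bij (inv r)" using r by (rule bij_imp_bij_inv)
  from f have int: "f integrable_on cbox a b" for a b
    by (simp add: has_integral_alt'[of f i UNIV])
  from f have lim: "\<forall>e>0. \<exists>B>0. \<forall>a b. ball 0 B \<subseteq> cbox a b \<longrightarrow> norm (integral (cbox a b) f - i) < e"
    by (simp add: has_integral_alt'[of f i UNIV])
  have cbox: "((\<lambda>y. f (?T y)) has_integral integral (cbox (?T c) (?T d)) f) (cbox c d)" for c d
    using has_integral_reindex_vec_cbox[OF r integrable_integral[OF int[of "?T c" "?T d"]]] r by simp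
  have ball: "ball 0 B \<subseteq> cbox (?T c) (?T d)" if "ball 0 B \<subseteq> cbox c d" for B c d
    using image_mono[OF that, of ?T] reindex_vec_ball[OF ir] reindex_vec_cbox[OF ir] by simp
  have "\<exists>B>0. \<forall>c d. ball 0 B \<subseteq> cbox c d \<longrightarrow> norm (integral (cbox c d) (\<lambda>y. f (?T y)) - i) < e"
    if "e > 0" for e
  proof -
    obtain B where "B > 0" and B: "\<And>a b. ball 0 B \<subseteq> cbox a b \<Longrightarrow> norm (integral (cbox a b) f - i) < e"
      using lim \<open>e > 0\<close> by blast
    then show ?thesis
      using B[OF ball] integral_unique[OF cbox] by auto
  qed
  with cbox show ?thesis
    by (auto simp: has_integral_alt'[of _ i UNIV])
qed

lemma has_integral_reindex_vec:
  fixes f :: "real^'a::finite \<Rightarrow> 'c::banach"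
  assumes r: "bij (r :: 'b::finite \<Rightarrow> 'a)"
  shows "((\<lambda>y. f (reindex_vec (inv r) y)) has_integral i) (reindex_vec r ` S) \<longleftrightarrow> (f has_integral i) S"
proof -
  let ?F = "\<lambda>x. if x \<in> S then f x else 0"
  have mem_iff: "reindex_vec (inv r) y \<in> S \<longleftrightarrow> y \<in> reindex_vec r ` S" for y
  proof
    assume "reindex_vec (inv r) y \<in> S"
    then have "reindex_vec r (reindex_vec (inv r) y) \<in> reindex_vec r ` S" by (rule imageI)
    then show "y \<in> reindex_vec r ` S" using r by simp
  next
    assume "y \<in> reindex_vec r ` S"
    then obtain x where "x \<in> S" "y = reindex_vec r x" by blast
    then show "reindex_vec (inv r) y \<in> S" using r by simp
  qed
  have restrict: "(\<lambda>y. if y \<in> reindex_vec r ` S then f (reindex_vec (inv r) y) else 0)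
      = (\<lambda>y. ?F (reindex_vec (inv r) y))"
    by (simp only: mem_iff)
  have inverse: "((\<lambda>x. G (reindex_vec r x)) has_integral i) UNIV"
    if "(G has_integral i) UNIV" for G :: "real^'b \<Rightarrow> 'c"
    using has_integral_reindex_vec_UNIV[OF bij_imp_bij_inv[OF r] that] by (simp only: inv_inv_eq[OF r])
  have "((\<lambda>y. f (reindex_vec (inv r) y)) has_integral i) (reindex_vec r ` S)
      \<longleftrightarrow> ((\<lambda>y. ?F (reindex_vec (inv r) y)) has_integral i) UNIV"
    unfolding restrict[symmetric] by (rule has_integral_restrict_UNIV[symmetric])
  also have "\<dots> \<longleftrightarrow> (?F has_integral i) UNIV"
  proof
    assume "((\<lambda>y. ?F (reindex_vec (inv r) y)) has_integral i) UNIV"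
    from inverse[OF this] show "(?F has_integral i) UNIV"
      by (simp only: reindex_vec_inv_left[OF r])
  qed (rule has_integral_reindex_vec_UNIV[OF r, of ?F])
  also have "\<dots> \<longleftrightarrow> (f has_integral i) S"
    by (rule has_integral_restrict_UNIV)
  finally show ?thesis .
qed

lemma absolutely_integrable_reindex_vec:
  fixes h :: "real^'a::finite \<Rightarrow> 'c::euclidean_space"
  assumes r: "bij (r :: 'b::finite \<Rightarrow> 'a)"
  shows "(\<lambda>y. h (reindex_vec (inv r) y)) absolutely_integrable_on (reindex_vec r ` A) \<and>
           integral (reindex_vec r ` A) (\<lambda>y. h (reindex_vec (inv r) y)) = b
         \<longleftrightarrow> h absolutely_integrable_on A \<and> integral A h = b"
proof -
  have abs_int_iff: "f absolutely_integrable_on S \<and> integral S f = c \<longleftrightarrow>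
      (f has_integral c) S \<and> (\<lambda>x. norm (f x)) integrable_on S"
    for f :: "real^'d::finite \<Rightarrow> 'c" and S c
    unfolding absolutely_integrable_on_def has_integral_integrable_integral by blast
  have "(\<lambda>y. norm (h (reindex_vec (inv r) y))) integrable_on reindex_vec r ` A
      \<longleftrightarrow> (\<lambda>x. norm (h x)) integrable_on A"
    using has_integral_reindex_vec[OF r, of "\<lambda>x. norm (h x)"] unfolding integrable_on_def by blast
  then show ?thesis
    by (simp only: abs_int_iff has_integral_reindex_vec[OF r])
qed

lemma det_reindex:
  fixes A :: "real^'a::finite^'a" and r :: "'b::finite \<Rightarrow> 'a"
  assumes r: "bij r"
  shows "det (\<chi> i j. A $ r i $ r j) = det A"
proof -
  let ?c = "\<lambda>q. (\<lambda>x. r (q (inv r x)))"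
  let ?d = "\<lambda>p. (\<lambda>y. inv r (p (r y)))"
  have rir: "r (inv r x) = x" for x using r by (simp add: bij_is_surj surj_f_inv_f)
  have irr: "inv r (r x) = x" for x using r by (simp add: bij_is_inj inv_f_f)
  have sign_conj: "sign (?c q) = sign q" if "q permutes (UNIV::'b set)" for q
  proof -
    have "permutes_bij_finite q UNIV UNIV r (inv r)"
      by unfold_locales (use that r irr in \<open>auto simp: bij_def\<close>)
    from permutes_bij_finite.sign_p'[OF this] show ?thesis by simp
  qed
  have perm_conj: "bij_betw ?c {q. q permutes (UNIV::'b set)} {p. p permutes (UNIV::'a set)}"
  proof (rule bij_betw_byWitness[where f'="?d"])
    show "?c ` {q. q permutes UNIV} \<subseteq> {p. p permutes UNIV}"
    proof (clarify, rule bij_imp_permutes)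
      fix q :: "'b \<Rightarrow> 'b" assume "q permutes UNIV"
      then have "bij (r \<circ> q \<circ> inv r)" by (intro bij_comp bij_imp_bij_inv r permutes_bij)
      then show "bij_betw (?c q) UNIV UNIV" by (simp add: o_def)
    qed simp
    show "?d ` {p. p permutes UNIV} \<subseteq> {q. q permutes UNIV}"
    proof (clarify, rule bij_imp_permutes)
      fix p :: "'a \<Rightarrow> 'a" assume "p permutes UNIV"
      then have "bij (inv r \<circ> p \<circ> r)" by (intro bij_comp bij_imp_bij_inv r permutes_bij)
      then show "bij_betw (?d p) UNIV UNIV" by (simp add: o_def)
    qed simp
  qed (simp_all add: irr rir)
  have prod_conj: "(\<Prod>i\<in>UNIV. A $ r i $ r (q i)) = (\<Prod>a\<in>UNIV. A $ a $ ?c q a)" for q :: "'b \<Rightarrow> 'b"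
    using prod.reindex[OF bij_is_inj[OF r], of "\<lambda>a. A $ a $ ?c q a"] r
    by (simp add: irr bij_is_surj o_def)
  have "det (\<chi> i j. A $ r i $ r j)
      = (\<Sum>q\<in>{q. q permutes UNIV}. of_int (sign (?c q)) * (\<Prod>a\<in>UNIV. A $ a $ ?c q a))"
    unfolding det_def by (simp add: sign_conj prod_conj)
  also have "\<dots> = det A"
    unfolding det_def using sum.reindex_bij_betw[OF perm_conj] by simp
  finally show ?thesis .
qed

lemma reindex_vec_axis:
  assumes r: "bij r" shows "reindex_vec (inv r) (axis j 1) = axis (r j) (1::real)"
proof -
  have "inv r i = j \<longleftrightarrow> i = r j" for i using bij_inv_eq_iff[OF r, of j i] by auto
  then show ?thesis by (simp add: vec_eq_iff axis_def)
qed

lemma matrix_reindex_vec_conj: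
  assumes r: "bij r"
  shows "matrix (\<lambda>y. reindex_vec r (L (reindex_vec (inv r) y))) = (\<chi> i j. matrix L $ r i $ r j)"
  using r by (simp add: matrix_def vec_eq_iff reindex_vec_axis)

theorem has_absolute_integral_change_of_variables_finite:
  fixes f :: "real^'m::finite \<Rightarrow> real^'n" and g :: "real^'m \<Rightarrow> real^'m"
  assumes S: "S \<in> sets lebesgue"
    and der_g: "\<And>x. x \<in> S \<Longrightarrow> (g has_derivative g' x) (at x within S)"
    and inj: "inj_on g S"
  shows "(\<lambda>x. \<bar>det (matrix (g' x))\<bar> *\<^sub>R f (g x)) absolutely_integrable_on S \<and>
           integral S (\<lambda>x. \<bar>det (matrix (g' x))\<bar> *\<^sub>R f (g x)) = b
     \<longleftrightarrow> f absolutely_integrable_on (g ` S) \<and> integral (g ` S) f = b"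
proof -
  define r where "r = (Rep_wo :: 'm wo \<Rightarrow> 'm)"
  have r: "bij r" using bij_Rep_wo r_def by simp
  define T where "T = reindex_vec r"
  define Ti where "Ti = reindex_vec (inv r)"
  have TiT [simp]: "Ti (T x) = x" for x using r by (simp add: T_def Ti_def)
  have TTi [simp]: "T (Ti y) = y" for y using r by (simp add: T_def Ti_def)
  have lin: "bounded_linear T" "bounded_linear Ti"
    unfolding T_def Ti_def by (rule bounded_linear_reindex_vec)+
  \<comment> \<open>\<open>g\<close> conjugated by the relabelling, to which the library theorem applies\<close>
  define G where "G = (\<lambda>y. T (g (Ti y)))"
  define G' where "G' = (\<lambda>y v. T (g' (Ti y) (Ti v)))"
  have TS: "T ` S \<in> sets lebesgue"
    using differentiable_image_in_sets_lebesgue[OF S _ bounded_linear_imp_differentiable_on[OF lin(1)]]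
    by (simp add: card_wo)
  have der_G: "(G has_derivative G' y) (at y within T ` S)" if y: "y \<in> T ` S" for y
  proof -
    have "Ti ` T ` S = S" by (simp add: image_image)
    then have "(g has_derivative g' (Ti y)) (at (Ti y) within Ti ` T ` S)"
      using der_g y by auto
    with bounded_linear_imp_has_derivative[OF lin(2)]
    have "((g \<circ> Ti) has_derivative (g' (Ti y) \<circ> Ti)) (at y within T ` S)"
      by (rule diff_chain_within)
    from bounded_linear.has_derivative[OF lin(1) this] show ?thesis
      by (simp add: G_def G'_def o_def)
  qed
  have inj_G: "inj_on G (T ` S)"
    using inj unfolding G_def inj_on_def by (metis TiT TTi image_iff)
  have det_G': "det (matrix (G' y)) = det (matrix (g' (Ti y)))" for y
    unfolding G'_def T_def Ti_def matrix_reindex_vec_conj[OF r] by (rule det_reindex[OF r])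
  have GTS: "G ` T ` S = T ` g ` S" by (auto simp: G_def image_image)
  have "(\<lambda>y. \<bar>det (matrix (G' y))\<bar> *\<^sub>R f (Ti (G y))) absolutely_integrable_on T ` S \<and>
           integral (T ` S) (\<lambda>y. \<bar>det (matrix (G' y))\<bar> *\<^sub>R f (Ti (G y))) = b
     \<longleftrightarrow> (\<lambda>y. f (Ti y)) absolutely_integrable_on (G ` T ` S) \<and> integral (G ` T ` S) (\<lambda>y. f (Ti y)) = b"
    by (rule has_absolute_integral_change_of_variables[OF TS der_G inj_G])
  moreover have "(\<lambda>y. \<bar>det (matrix (G' y))\<bar> *\<^sub>R f (Ti (G y)))
      = (\<lambda>y. (\<lambda>x. \<bar>det (matrix (g' x))\<bar> *\<^sub>R f (g x)) (Ti y))"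
    by (simp add: det_G' G_def)
  ultimately show ?thesis
    using absolutely_integrable_reindex_vec[OF r, where h="\<lambda>x. \<bar>det (matrix (g' x))\<bar> *\<^sub>R f (g x)" and A=S]
      absolutely_integrable_reindex_vec[OF r, where h=f and A="g ` S"]
    unfolding T_def Ti_def by (simp add: GTS[unfolded T_def])
qed

corollary has_absolute_integral_change_of_variables_finite_real:
  fixes f :: "real^'m::finite \<Rightarrow> real" and g :: "real^'m \<Rightarrow> real^'m"
  assumes S: "S \<in> sets lebesgue"
    and der_g: "\<And>x. x \<in> S \<Longrightarrow> (g has_derivative g' x) (at x within S)"
    and inj: "inj_on g S"
  shows "(\<lambda>x. \<bar>det (matrix (g' x))\<bar> * f (g x)) absolutely_integrable_on S \<and>
           integral S (\<lambda>x. \<bar>det (matrix (g' x))\<bar> * f (g x)) = b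
     \<longleftrightarrow> f absolutely_integrable_on (g ` S) \<and> integral (g ` S) f = b"
  using has_absolute_integral_change_of_variables_finite[OF S der_g inj,
      of "\<lambda>x. vec (f x) :: real^1" "vec b"]
  unfolding absolutely_integrable_on_1_iff integral_on_1_eq by (simp add: vec_eq_iff)

lemma integrable_lebesgue_on_iff_absolutely_integrable:
  fixes f :: "'a::euclidean_space \<Rightarrow> real"
  assumes "S \<in> sets lebesgue"
  shows "integrable (lebesgue_on S) f \<longleftrightarrow> f absolutely_integrable_on S"
  using integrable_restrict_space[of S lebesgue f] assms by (simp add: set_integrable_def)

lemma
  fixes f :: "real^'n::finite \<Rightarrow> real" and g :: "real^'n \<Rightarrow> real^'n"
  assumes S: "S \<in> sets lebesgue"
    and der_g: "\<And>x. x \<in> S \<Longrightarrow> (g has_derivative g' x) (at x within S)"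
    and inj: "inj_on g S"
  shows integrable_lebesgue_on_change_of_variables:
      "integrable (lebesgue_on S) (\<lambda>x. \<bar>det (matrix (g' x))\<bar> * f (g x))
       \<longleftrightarrow> integrable (lebesgue_on (g ` S)) f"
    and integral_lebesgue_on_change_of_variables:
      "(\<integral>x. \<bar>det (matrix (g' x))\<bar> * f (g x) \<partial>lebesgue_on S) = (\<integral>y. f y \<partial>lebesgue_on (g ` S))"
proof -
  let ?H = "\<lambda>x. \<bar>det (matrix (g' x))\<bar> * f (g x)"
  have gS: "g ` S \<in> sets lebesgue"
    using differentiable_image_in_sets_lebesgue[OF S order_refl] der_g
    by (auto simp: differentiable_on_def differentiable_def)
  note cov = has_absolute_integral_change_of_variables_finite_real[OF S der_g inj, of f]
  show int_iff: "integrable (lebesgue_on S) ?H \<longleftrightarrow> integrable (lebesgue_on (g ` S)) f"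
    using cov by (simp add: integrable_lebesgue_on_iff_absolutely_integrable[OF S]
        integrable_lebesgue_on_iff_absolutely_integrable[OF gS]) blast
  show "(\<integral>x. ?H x \<partial>lebesgue_on S) = (\<integral>y. f y \<partial>lebesgue_on (g ` S))"
  proof (cases "integrable (lebesgue_on S) ?H")
    case True
    then have "f absolutely_integrable_on (g ` S) \<and> integral (g ` S) f = integral S ?H"
      using cov[of "integral S ?H"] integrable_lebesgue_on_iff_absolutely_integrable[OF S] by blast
    then show ?thesis
      using True int_iff lebesgue_integral_eq_integral[OF True S]
        lebesgue_integral_eq_integral[of "g ` S" f, OF _ gS] by simp
  next
    case False
    then show ?thesis using int_iff by (simp add: not_integrable_integral_eq)
  qed
qed

section \<open>Transport of measures along densities\<close>

lemma nn_integral_nonneg_real_eq: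
  fixes f :: "'a \<Rightarrow> real"
  assumes f: "f \<in> borel_measurable M" and nonneg: "\<And>x. x \<in> space M \<Longrightarrow> 0 \<le> f x"
  shows "(\<integral>\<^sup>+x. ennreal (f x) \<partial>M) = (if integrable M f then ennreal (integral\<^sup>L M f) else \<infinity>)"
proof -
  have "(\<integral>\<^sup>+x. ennreal (norm (f x)) \<partial>M) = (\<integral>\<^sup>+x. ennreal (f x) \<partial>M)"
    by (rule nn_integral_cong) (simp add: nonneg)
  then show ?thesis
    using f nonneg by (auto simp: integrable_iff_bounded less_top[symmetric]
        intro!: nn_integral_eq_integral AE_I2)
qed

lemma sigma_finite_lebesgue_on:
  assumes "S \<in> sets lebesgue"
  shows "sigma_finite_measure (lebesgue_on S :: 'a::euclidean_space measure)"
proof (rule sigma_finite_measure_restrict_space[OF _ assms], standard)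
  let ?C = "range (\<lambda>n::nat. cball (0::'a) (real n))"
  have "(\<Union>n. cball (0::'a) (real n)) = UNIV"
    using real_arch_simple by (auto simp: dist_norm)
  then show "\<exists>A::'a set set. countable A \<and> A \<subseteq> sets lebesgue \<and> \<Union>A = space lebesgue \<and>
      (\<forall>a\<in>A. emeasure lebesgue a \<noteq> \<infinity>)"
    using fmeasurableD2[OF lmeasurable_cball] by (intro exI[of _ ?C]) (auto simp: fmeasurableD)
qed

lemma integral_distr_density_inverse:
  fixes H :: "'a \<Rightarrow> real"
  assumes distr_eq: "distr (density N (\<lambda>y. ennreal (f y))) M g = M"
    and g: "g \<in> N \<rightarrow>\<^sub>M M" and f: "f \<in> borel_measurable N" and f_pos: "\<And>y. y \<in> space N \<Longrightarrow> 0 < f y"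
    and h: "h \<in> M \<rightarrow>\<^sub>M N" and g_h: "\<And>x. x \<in> space M \<Longrightarrow> g (h x) = x"
  shows "(\<integral>y. f y * H (g y) \<partial>N) = (\<integral>x. H x \<partial>M)"
proof (cases "H \<in> borel_measurable M")
  case True
  have g': "g \<in> density N (\<lambda>y. ennreal (f y)) \<rightarrow>\<^sub>M M"
    using g by simp
  have "(\<integral>x. H x \<partial>M) = (\<integral>x. H x \<partial>distr (density N (\<lambda>y. ennreal (f y))) M g)"
    by (simp add: distr_eq)
  also have "\<dots> = (\<integral>y. H (g y) \<partial>density N (\<lambda>y. ennreal (f y)))"
    by (rule integral_distr[OF g' True])
  also have "\<dots> = (\<integral>y. f y *\<^sub>R H (g y) \<partial>N)"
  proof (rule integral_density)
    show "(\<lambda>y. H (g y)) \<in> borel_measurable N" using measurable_compose[OF g True] .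
    show "AE y in N. 0 \<le> f y" using f_pos by (intro AE_I2) (simp add: less_imp_le)
  qed (rule f)
  finally show ?thesis by simp
next
  case False
  have "(\<lambda>y. f y * H (g y)) \<notin> borel_measurable N"
  proof
    assume "(\<lambda>y. f y * H (g y)) \<in> borel_measurable N"
    from measurable_compose[OF h this] measurable_compose[OF h f]
    have "(\<lambda>x. f (h x) * H (g (h x)) / f (h x)) \<in> borel_measurable M"
      by (rule borel_measurable_divide)
    moreover have "f (h x) * H (g (h x)) / f (h x) = H x" if "x \<in> space M" for x
      using f_pos[OF measurable_space[OF h that]] g_h[OF that] by simp
    ultimately have "H \<in> borel_measurable M"
      by (rule measurable_cong[THEN iffD1, rotated]) simp
    with False show False ..
  qed
  then show ?thesis
    using False by (metis borel_measurable_integrable not_integrable_integral_eq)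
qed

lemma emeasure_distr_density_eq:
  assumes distr_eq: "distr (density N (\<lambda>y. ennreal (f y))) M g = M"
    and g: "g \<in> N \<rightarrow>\<^sub>M M" and f: "f \<in> borel_measurable N" and A: "A \<in> sets M"
  shows "emeasure M A = (\<integral>\<^sup>+z. ennreal (f z) * indicator (g -` A \<inter> space N) z \<partial>N)"
proof -
  have "emeasure M A = emeasure (density N (\<lambda>y. ennreal (f y))) (g -` A \<inter> space N)"
    using emeasure_distr[of g "density N (\<lambda>y. ennreal (f y))" M A] g A by (simp add: distr_eq)
  also have "\<dots> = (\<integral>\<^sup>+z. ennreal (f z) * indicator (g -` A \<inter> space N) z \<partial>N)"
    using f measurable_sets[OF g A] by (intro emeasure_density) simp_all
  finally show ?thesis .
qed

lemma measurable_PiM_compose_components: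
  "g \<in> N \<rightarrow>\<^sub>M M \<Longrightarrow> (\<lambda>y. \<lambda>i\<in>I. g (y i)) \<in> PiM I (\<lambda>_. N) \<rightarrow>\<^sub>M PiM I (\<lambda>_. M)"
  by (intro measurable_restrict) (auto intro: measurable_compose[OF measurable_component_singleton])

lemma distr_density_PiM:
  fixes I :: "'i set" and f :: "'b \<Rightarrow> real"
  assumes I: "finite I" and M: "sigma_finite_measure M" and N: "sigma_finite_measure N"
    and distr_eq: "distr (density N (\<lambda>y. ennreal (f y))) M g = M"
    and g: "g \<in> N \<rightarrow>\<^sub>M M" and f: "f \<in> borel_measurable N"
    and f_nonneg: "\<And>y. y \<in> space N \<Longrightarrow> 0 \<le> f y"
  shows "distr (density (PiM I (\<lambda>_. N)) (\<lambda>y. ennreal (\<Prod>i\<in>I. f (y i)))) (PiM I (\<lambda>_. M))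
      (\<lambda>y. \<lambda>i\<in>I. g (y i)) = PiM I (\<lambda>_. M)"
proof -
  interpret M: product_sigma_finite "\<lambda>_::'i. M"
    using M by (simp add: product_sigma_finite_def)
  interpret N: product_sigma_finite "\<lambda>_::'i. N"
    using N by (simp add: product_sigma_finite_def)
  let ?D = "density (PiM I (\<lambda>_. N)) (\<lambda>y. ennreal (\<Prod>i\<in>I. f (y i)))"
  let ?g = "\<lambda>y. \<lambda>i\<in>I. g (y i)"
  have g_PiM: "?g \<in> PiM I (\<lambda>_. N) \<rightarrow>\<^sub>M PiM I (\<lambda>_. M)"
    using g by (rule measurable_PiM_compose_components)
  have f_PiM: "(\<lambda>y. \<Prod>i\<in>I. f (y i)) \<in> borel_measurable (PiM I (\<lambda>_. N))"
    using f by (intro borel_measurable_prod) (auto intro: measurable_compose[OF measurable_component_singleton])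
  show ?thesis
  proof (rule M.PiM_eqI[OF I])
    fix A assume A: "\<And>i. i \<in> I \<Longrightarrow> A i \<in> sets M"
    have PiE_A: "Pi\<^sub>E I A \<in> sets (PiM I (\<lambda>_. M))"
      using A by (intro sets_PiM_I_finite I)
    have "emeasure (distr ?D (PiM I (\<lambda>_. M)) ?g) (Pi\<^sub>E I A)
        = emeasure ?D (?g -` Pi\<^sub>E I A \<inter> space (PiM I (\<lambda>_. N)))"
      using g_PiM PiE_A by (simp add: emeasure_distr)
    also have "\<dots> = (\<integral>\<^sup>+y. ennreal (\<Prod>i\<in>I. f (y i)) * indicator (?g -` Pi\<^sub>E I A \<inter> space (PiM I (\<lambda>_. N))) y
        \<partial>PiM I (\<lambda>_. N))"
      using f_PiM measurable_sets[OF g_PiM PiE_A] by (intro emeasure_density) simp_all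
    also have "\<dots> = (\<integral>\<^sup>+y. (\<Prod>i\<in>I. ennreal (f (y i)) * indicator (g -` A i \<inter> space N) (y i)) \<partial>PiM I (\<lambda>_. N))"
    proof (rule nn_integral_cong)
      fix y assume y: "y \<in> space (PiM I (\<lambda>_. N))"
      then have y_N: "\<And>i. i \<in> I \<Longrightarrow> y i \<in> space N" by (auto simp: space_PiM)
      have "ennreal (\<Prod>i\<in>I. f (y i)) = (\<Prod>i\<in>I. ennreal (f (y i)))"
        using f_nonneg y_N by (simp add: prod_ennreal)
      moreover have "indicator (?g -` Pi\<^sub>E I A \<inter> space (PiM I (\<lambda>_. N))) y
          = (\<Prod>i\<in>I. indicator (g -` A i \<inter> space N) (y i) :: ennreal)"
        using y y_N I by (auto simp: indicator_def PiE_iff prod_zero)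
      ultimately show "ennreal (\<Prod>i\<in>I. f (y i)) * indicator (?g -` Pi\<^sub>E I A \<inter> space (PiM I (\<lambda>_. N))) y
          = (\<Prod>i\<in>I. ennreal (f (y i)) * indicator (g -` A i \<inter> space N) (y i))"
        by (simp add: prod.distrib)
    qed
    also have "\<dots> = (\<Prod>i\<in>I. \<integral>\<^sup>+z. ennreal (f z) * indicator (g -` A i \<inter> space N) z \<partial>N)"
      using f measurable_sets[OF g A] by (intro N.product_nn_integral_prod I) (measurable, auto)
    also have "\<dots> = (\<Prod>i\<in>I. emeasure M (A i))"
      using emeasure_distr_density_eq[OF distr_eq g f] A by simp
    finally show "emeasure (distr ?D (PiM I (\<lambda>_. M)) ?g) (Pi\<^sub>E I A) = (\<Prod>i\<in>I. emeasure M (A i))" .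
  qed simp
qed

section \<open>Diffeomorphisms between open sets\<close>

lemma measurable_lebesgue_on_differentiable_inverse:
  fixes f g :: "'a::euclidean_space \<Rightarrow> 'a"
  assumes B: "B \<in> sets lebesgue" and g: "g differentiable_on B"
    and f_B: "\<And>x. x \<in> A \<Longrightarrow> f x \<in> B" and g_A: "\<And>y. y \<in> B \<Longrightarrow> g y \<in> A"
    and g_f: "\<And>x. x \<in> A \<Longrightarrow> g (f x) = x" and f_g: "\<And>y. y \<in> B \<Longrightarrow> f (g y) = y"
  shows "f \<in> lebesgue_on A \<rightarrow>\<^sub>M lebesgue_on B"
proof (rule measurableI)
  show "f x \<in> space (lebesgue_on B)" if "x \<in> space (lebesgue_on A)" for x
    using that f_B by simp
  fix S assume S: "S \<in> sets (lebesgue_on B)"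
  then have "S \<subseteq> B" using sets.sets_into_space by fastforce
  then have "f -` S \<inter> space (lebesgue_on A) = g ` S"
    using f_B g_A g_f f_g by (auto simp: image_iff) metis+
  moreover have "g ` B = A"
    using g_A g_f f_B by (force simp: image_iff)
  ultimately show "f -` S \<inter> space (lebesgue_on A) \<in> sets (lebesgue_on A)"
    using differentiable_image_in_sets_lebesgue_on[OF B S order_refl g] by simp
qed

locale diffeo =
  fixes \<phi> :: "real^'m::finite \<Rightarrow> real^'m" and A B :: "(real^'m) set"
  assumes diffeo: "diffeo_on \<phi> A B"
begin

abbreviation \<phi>_inv :: "real^'m \<Rightarrow> real^'m" where
  "\<phi>_inv \<equiv> inv_into A \<phi>"

abbreviation jac :: "real^'m \<Rightarrow> real" where
  "jac \<equiv> inv_jac \<phi> A"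

lemma open_A: "open A" and open_B: "open B" and bij: "bij_betw \<phi> A B"
  and differentiable_\<phi>: "\<And>x. x \<in> A \<Longrightarrow> \<phi> differentiable (at x)"
  and differentiable_\<phi>_inv: "\<And>y. y \<in> B \<Longrightarrow> \<phi>_inv differentiable (at y)"
  and continuous_on_jac_matrix: "continuous_on B (\<lambda>y. matrix (frechet_derivative \<phi>_inv (at y)))"
  using diffeo unfolding diffeo_on_def by auto

lemma A_lebesgue: "A \<in> sets lebesgue" and B_lebesgue: "B \<in> sets lebesgue"
  using open_A open_B by auto

lemma \<phi>_in: "x \<in> A \<Longrightarrow> \<phi> x \<in> B"
  using bij by (auto simp: bij_betw_def)

lemma \<phi>_inv_in: "y \<in> B \<Longrightarrow> \<phi>_inv y \<in> A"
  using bij by (metis bij_betw_def inv_into_into)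

lemma \<phi>_\<phi>_inv [simp]: "y \<in> B \<Longrightarrow> \<phi> (\<phi>_inv y) = y"
  using bij by (meson bij_betw_inv_into_right)

lemma \<phi>_inv_\<phi> [simp]: "x \<in> A \<Longrightarrow> \<phi>_inv (\<phi> x) = x"
  using bij by (meson bij_betw_inv_into_left)

lemma \<phi>_inv_image: "\<phi>_inv ` B = A"
  using \<phi>_inv_in \<phi>_in \<phi>_inv_\<phi> by (force simp: image_iff)

lemma inj_on_\<phi>_inv: "inj_on \<phi>_inv B"
  by (metis inj_on_def \<phi>_\<phi>_inv)

lemma has_derivative_\<phi>_inv:
  "y \<in> B \<Longrightarrow> (\<phi>_inv has_derivative frechet_derivative \<phi>_inv (at y)) (at y)"
  using differentiable_\<phi>_inv frechet_derivative_works by blast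

lemma jac_pos: assumes y: "y \<in> B" shows "jac y > 0"
proof -
  let ?D\<phi>_inv = "frechet_derivative \<phi>_inv (at y)"
  let ?D\<phi> = "frechet_derivative \<phi> (at (\<phi>_inv y))"
  have D\<phi>_inv: "(\<phi>_inv has_derivative ?D\<phi>_inv) (at y)"
    using has_derivative_\<phi>_inv[OF y] .
  have D\<phi>: "(\<phi> has_derivative ?D\<phi>) (at (\<phi>_inv y))"
    using differentiable_\<phi>[OF \<phi>_inv_in[OF y]] frechet_derivative_works by blast
  have "((\<phi> \<circ> \<phi>_inv) has_derivative (\<lambda>x. x)) (at y)"
    by (rule has_derivative_transform_within_open[OF has_derivative_ident open_B y]) simp
  then have "?D\<phi> \<circ> ?D\<phi>_inv = (\<lambda>x. x)"
    using has_derivative_unique[OF diff_chain_at[OF D\<phi>_inv D\<phi>]] by blast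
  then have "matrix ?D\<phi> ** matrix ?D\<phi>_inv = mat 1"
    using matrix_compose[OF has_derivative_linear[OF D\<phi>_inv] has_derivative_linear[OF D\<phi>]]
    by (simp add: matrix_id_mat_1[unfolded id_def])
  then have "det (matrix ?D\<phi>) * det (matrix ?D\<phi>_inv) = 1"
    by (metis det_mul det_I)
  then show ?thesis by (auto simp: inv_jac_def)
qed

lemma
  assumes eq: "\<And>y. y \<in> B \<Longrightarrow> \<Phi> y = jac y * \<Psi> (\<phi>_inv y)"
  shows integrable_lebesgue_on_transform: "integrable (lebesgue_on B) \<Phi> \<longleftrightarrow> integrable (lebesgue_on A) \<Psi>"
    and integral_lebesgue_on_transform: "(\<integral>y. \<Phi> y \<partial>lebesgue_on B) = (\<integral>x. \<Psi> x \<partial>lebesgue_on A)"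
proof -
  have der: "\<And>y. y \<in> B \<Longrightarrow> (\<phi>_inv has_derivative frechet_derivative \<phi>_inv (at y)) (at y within B)"
    using has_derivative_\<phi>_inv has_derivative_at_withinI by blast
  have "integrable (lebesgue_on B) \<Phi> \<longleftrightarrow> integrable (lebesgue_on B) (\<lambda>y. jac y * \<Psi> (\<phi>_inv y))"
    by (rule Bochner_Integration.integrable_cong) (auto simp: eq)
  then show "integrable (lebesgue_on B) \<Phi> \<longleftrightarrow> integrable (lebesgue_on A) \<Psi>"
    using integrable_lebesgue_on_change_of_variables[OF B_lebesgue der inj_on_\<phi>_inv, of \<Psi>]
    by (simp add: inv_jac_def \<phi>_inv_image)
  have "(\<integral>y. \<Phi> y \<partial>lebesgue_on B) = (\<integral>y. jac y * \<Psi> (\<phi>_inv y) \<partial>lebesgue_on B)"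
    by (rule Bochner_Integration.integral_cong) (auto simp: eq)
  then show "(\<integral>y. \<Phi> y \<partial>lebesgue_on B) = (\<integral>x. \<Psi> x \<partial>lebesgue_on A)"
    using integral_lebesgue_on_change_of_variables[OF B_lebesgue der inj_on_\<phi>_inv, of \<Psi>]
    by (simp add: inv_jac_def \<phi>_inv_image)
qed

lemma measurable_\<phi>: "\<phi> \<in> lebesgue_on A \<rightarrow>\<^sub>M lebesgue_on B"
  by (rule measurable_lebesgue_on_differentiable_inverse[OF B_lebesgue _ \<phi>_in \<phi>_inv_in \<phi>_inv_\<phi> \<phi>_\<phi>_inv])
    (use differentiable_\<phi>_inv differentiable_at_imp_differentiable_on in blast)

lemma measurable_\<phi>_inv: "\<phi>_inv \<in> lebesgue_on B \<rightarrow>\<^sub>M lebesgue_on A"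
  by (rule measurable_lebesgue_on_differentiable_inverse[OF A_lebesgue _ \<phi>_inv_in \<phi>_in \<phi>_\<phi>_inv \<phi>_inv_\<phi>])
    (use differentiable_\<phi> differentiable_at_imp_differentiable_on in blast)

lemma measurable_jac: "jac \<in> borel_measurable (lebesgue_on B)"
proof -
  have "continuous_on B jac"
    unfolding inv_jac_def det_def by (intro continuous_intros continuous_on_jac_matrix)
  then show ?thesis
    using continuous_imp_measurable_on_sets_lebesgue B_lebesgue by blast
qed

lemma distr_density_jac: "distr (density (lebesgue_on B) (\<lambda>y. ennreal (jac y))) (lebesgue_on A) \<phi>_inv = lebesgue_on A"
proof (rule measure_eqI)
  fix S assume "S \<in> sets (distr (density (lebesgue_on B) (\<lambda>y. ennreal (jac y))) (lebesgue_on A) \<phi>_inv)"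
  then have S: "S \<in> sets (lebesgue_on A)" by simp
  have jac_S: "(\<lambda>y. jac y * indicator S (\<phi>_inv y)) \<in> borel_measurable (lebesgue_on B)"
    using measurable_jac measurable_compose[OF measurable_\<phi>_inv borel_measurable_indicator[OF S]]
    by (rule borel_measurable_times)
  have int_iff: "integrable (lebesgue_on B) (\<lambda>y. jac y * indicator S (\<phi>_inv y))
      \<longleftrightarrow> integrable (lebesgue_on A) (indicator S :: _ \<Rightarrow> real)"
    by (rule integrable_lebesgue_on_transform) simp
  have int_eq: "(\<integral>y. jac y * indicator S (\<phi>_inv y) \<partial>lebesgue_on B) = (\<integral>x. indicator S x \<partial>lebesgue_on A)"
    by (rule integral_lebesgue_on_transform) simp
  have "(\<integral>\<^sup>+y. ennreal (jac y) * indicator (\<phi>_inv -` S \<inter> B) y \<partial>lebesgue_on B)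
      = (\<integral>\<^sup>+y. ennreal (jac y * indicator S (\<phi>_inv y)) \<partial>lebesgue_on B)"
    by (rule nn_integral_cong) (auto simp: indicator_def)
  also have "\<dots> = (if integrable (lebesgue_on B) (\<lambda>y. jac y * indicator S (\<phi>_inv y))
         then ennreal (\<integral>y. jac y * indicator S (\<phi>_inv y) \<partial>lebesgue_on B) else \<infinity>)"
    using jac_S jac_pos by (intro nn_integral_nonneg_real_eq) (auto simp: less_imp_le)
  also have "\<dots> = (\<integral>\<^sup>+x. ennreal (indicator S x) \<partial>lebesgue_on A)"
    using S by (simp only: int_iff int_eq nn_integral_nonneg_real_eq[symmetric] borel_measurable_indicator
        indicator_pos_le)
  also have "\<dots> = emeasure (lebesgue_on A) S"
    using S by (simp add: ennreal_indicator)
  finally have "(\<integral>\<^sup>+y. ennreal (jac y) * indicator (\<phi>_inv -` S \<inter> B) y \<partial>lebesgue_on B) = emeasure (lebesgue_on A) S" .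
  then show "emeasure (distr (density (lebesgue_on B) (\<lambda>y. ennreal (jac y))) (lebesgue_on A) \<phi>_inv) S
      = emeasure (lebesgue_on A) S"
    using measurable_\<phi>_inv measurable_jac S measurable_sets[OF measurable_\<phi>_inv S]
    by (simp add: emeasure_distr emeasure_density)
qed simp

subsection \<open>Reparametrisation\<close>

lemma push_density_eq: "y \<in> B \<Longrightarrow> push_density \<phi> A \<sigma> y = jac y * \<sigma> (\<phi>_inv y)"
  using bij by (simp add: push_density_def bij_betw_def)

lemma push_density_\<phi>: "x \<in> A \<Longrightarrow> push_density \<phi> A \<sigma> (\<phi> x) = jac (\<phi> x) * \<sigma> x"
  by (simp add: push_density_eq \<phi>_in)

lemma proper_density_push_density_iff:
  "proper_density B (push_density \<phi> A \<sigma>) \<longleftrightarrow> proper_density A \<sigma>"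
proof -
  have "(\<forall>y\<in>B. 0 \<le> push_density \<phi> A \<sigma> y) \<longleftrightarrow> (\<forall>x\<in>A. 0 \<le> \<sigma> x)"
    using jac_pos \<phi>_in \<phi>_inv_in
    by (metis push_density_eq push_density_\<phi> zero_le_mult_iff not_le order_less_asym)
  moreover have "integrable (lebesgue_on B) (push_density \<phi> A \<sigma>) \<longleftrightarrow> integrable (lebesgue_on A) \<sigma>"
    by (rule integrable_lebesgue_on_transform) (simp add: push_density_eq)
  moreover have "(\<integral>y. push_density \<phi> A \<sigma> y \<partial>lebesgue_on B) = (\<integral>x. \<sigma> x \<partial>lebesgue_on A)"
    by (rule integral_lebesgue_on_transform) (simp add: push_density_eq)
  ultimately show ?thesis
    unfolding proper_density_def by simp
qed

lemma pmarg_param_transform: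
  "pmarg B (\<lambda>y \<theta>. q y (\<phi>_inv \<theta>)) (push_density \<phi> A \<sigma>) = pmarg A q \<sigma>"
  unfolding pmarg_def
  by (intro ext integral_lebesgue_on_transform) (simp add: push_density_eq)

lemma exp_info_param_transform:
  "exp_info Y B (\<lambda>y \<theta>. q y (\<phi>_inv \<theta>)) (push_density \<phi> A \<sigma>) = exp_info Y A q \<sigma>"
  unfolding exp_info_def pmarg_param_transform
  by (intro integral_lebesgue_on_transform) (simp add: push_density_eq mult.assoc)

lemma mmi_objective_param_transform:
  "mmi_objective X B (param_transform \<phi> A p) xs \<gamma> k (push_density \<phi> A \<sigma>) = mmi_objective X A p xs \<gamma> k \<sigma>"
proof -
  have "rep_model k (param_transform \<phi> A p) = (\<lambda>xv \<theta>. rep_model k p xv (\<phi>_inv \<theta>))"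
    by (simp add: rep_model_def param_transform_def fun_eq_iff)
  moreover have "param_transform \<phi> A p = (\<lambda>x \<theta>. p x (\<phi>_inv \<theta>))"
    by (simp add: param_transform_def fun_eq_iff)
  ultimately show ?thesis
    by (simp add: mmi_objective_def log_marg_lik_def marg_lik_def pmarg_param_transform
        exp_info_param_transform)
qed

lemma push_density_inj:
  assumes "\<forall>\<theta>. \<theta> \<notin> A \<longrightarrow> \<sigma> \<theta> = 0" and "\<forall>\<theta>. \<theta> \<notin> A \<longrightarrow> \<tau> \<theta> = 0"
    and "push_density \<phi> A \<sigma> = push_density \<phi> A \<tau>"
  shows "\<sigma> = \<tau>"
proof
  fix x show "\<sigma> x = \<tau> x"
  proof (cases "x \<in> A")
    case True
    then have "jac (\<phi> x) * \<sigma> x = jac (\<phi> x) * \<tau> x"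
      using assms(3) by (metis push_density_\<phi>)
    with jac_pos[OF \<phi>_in[OF True]] show ?thesis by simp
  qed (use assms in simp)
qed

lemma emp_ref_prior_param_transform_iff:
  assumes P: "\<forall>\<pi>\<in>P. \<forall>\<theta>. \<theta> \<notin> A \<longrightarrow> \<pi> \<theta> = 0" and \<pi>: "\<forall>\<theta>. \<theta> \<notin> A \<longrightarrow> \<pi> \<theta> = 0"
  shows "emp_ref_prior X A p P xs \<gamma> \<pi> \<longleftrightarrow>
    emp_ref_prior X B (param_transform \<phi> A p) (push_density \<phi> A ` P) xs \<gamma> (push_density \<phi> A \<pi>)"
proof -
  have "push_density \<phi> A \<pi> \<in> push_density \<phi> A ` P \<longleftrightarrow> \<pi> \<in> P"
    using push_density_inj[OF \<pi>] P by blast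
  then show ?thesis
    unfolding emp_ref_prior_def
    by (simp add: proper_density_push_density_iff mmi_objective_param_transform)
qed

subsection \<open>Transformation of the data\<close>

lemma prod_jac_pos: "y \<in> space (rep_space k (lebesgue_on B)) \<Longrightarrow> 0 < (\<Prod>i<k. jac (y i))"
  using jac_pos by (intro prod_pos) (auto simp: space_PiM rep_space_def)

lemma integral_rep_space_transform:
  fixes H :: "(nat \<Rightarrow> real^'m) \<Rightarrow> real"
  shows "(\<integral>y. (\<Prod>i<k. jac (y i)) * H (\<lambda>i\<in>{..<k}. \<phi>_inv (y i)) \<partial>rep_space k (lebesgue_on B))
    = (\<integral>x. H x \<partial>rep_space k (lebesgue_on A))"
  unfolding rep_space_def
proof (rule integral_distr_density_inverse)
  show "distr (density (PiM {..<k} (\<lambda>_. lebesgue_on B)) (\<lambda>y. ennreal (\<Prod>i<k. jac (y i))))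
      (PiM {..<k} (\<lambda>_. lebesgue_on A)) (\<lambda>y. \<lambda>i\<in>{..<k}. \<phi>_inv (y i)) = PiM {..<k} (\<lambda>_. lebesgue_on A)"
    using sigma_finite_lebesgue_on[OF A_lebesgue] sigma_finite_lebesgue_on[OF B_lebesgue]
      distr_density_jac measurable_\<phi>_inv measurable_jac jac_pos
    by (intro distr_density_PiM) (auto simp: less_imp_le)
  show "(\<lambda>y. \<Prod>i<k. jac (y i)) \<in> borel_measurable (PiM {..<k} (\<lambda>_. lebesgue_on B))"
    using measurable_jac by (intro borel_measurable_prod)
      (auto intro: measurable_compose[OF measurable_component_singleton])
  show "0 < (\<Prod>i<k. jac (y i))" if "y \<in> space (PiM {..<k} (\<lambda>_. lebesgue_on B))" for y
    using prod_jac_pos that by (simp add: rep_space_def)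
  show "(\<lambda>i\<in>{..<k}. \<phi>_inv ((\<lambda>i\<in>{..<k}. \<phi> (x i)) i)) = x"
    if "x \<in> space (PiM {..<k} (\<lambda>_. lebesgue_on A))" for x
    using that by (auto simp: space_PiM PiE_iff fun_eq_iff extensional_def)
qed (use measurable_PiM_compose_components measurable_\<phi> measurable_\<phi>_inv in blast)+

lemma rep_model_data_transform:
  "rep_model k (data_transform \<phi> A p) y \<theta> = (\<Prod>i<k. jac (y i)) * rep_model k p (\<lambda>i\<in>{..<k}. \<phi>_inv (y i)) \<theta>"
  by (simp add: rep_model_def data_transform_def prod.distrib)

lemma exp_info_data_transform:
  "exp_info (rep_space k (lebesgue_on B)) \<Theta> (rep_model k (data_transform \<phi> A p)) \<pi>
    = exp_info (rep_space k (lebesgue_on A)) \<Theta> (rep_model k p) \<pi>"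
proof -
  let ?q = "rep_model k (data_transform \<phi> A p)" and ?m = "pmarg \<Theta> (rep_model k p) \<pi>"
  let ?F = "\<lambda>\<theta> x. \<pi> \<theta> * rep_model k p x \<theta> * ln (rep_model k p x \<theta> / ?m x)"
  have pmarg_eq: "pmarg \<Theta> ?q \<pi> y = (\<Prod>i<k. jac (y i)) * ?m (\<lambda>i\<in>{..<k}. \<phi>_inv (y i))" for y
    by (simp add: pmarg_def rep_model_data_transform mult.assoc)
  text \<open>The Jacobian factors cancel inside the logarithm; the one in front is absorbed by the
    change of variables on the replicated data space.\<close>
  have "(\<integral>y. \<pi> \<theta> * ?q y \<theta> * ln (?q y \<theta> / pmarg \<Theta> ?q \<pi> y) \<partial>rep_space k (lebesgue_on B))
      = (\<integral>x. ?F \<theta> x \<partial>rep_space k (lebesgue_on A))" for \<theta>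
  proof -
    have "(\<integral>y. \<pi> \<theta> * ?q y \<theta> * ln (?q y \<theta> / pmarg \<Theta> ?q \<pi> y) \<partial>rep_space k (lebesgue_on B))
        = (\<integral>y. (\<Prod>i<k. jac (y i)) * ?F \<theta> (\<lambda>i\<in>{..<k}. \<phi>_inv (y i)) \<partial>rep_space k (lebesgue_on B))"
      using prod_jac_pos
      by (intro Bochner_Integration.integral_cong) (simp_all add: rep_model_data_transform pmarg_eq)
    also have "\<dots> = (\<integral>x. ?F \<theta> x \<partial>rep_space k (lebesgue_on A))"
      by (rule integral_rep_space_transform)
    finally show ?thesis .
  qed
  then show ?thesis
    by (simp add: exp_info_def)
qed

lemma log_marg_lik_data_transform:
  assumes "set xs \<subseteq> A"
  shows "log_marg_lik \<Theta> (data_transform \<phi> A p) \<pi> (map \<phi> xs)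
    = log_marg_lik \<Theta> p \<pi> xs + ereal (ln (\<Prod>x\<leftarrow>xs. jac (\<phi> x)))"
proof -
  have pmarg_eq: "pmarg \<Theta> (data_transform \<phi> A p) \<pi> (\<phi> x) = jac (\<phi> x) * pmarg \<Theta> p \<pi> x" if "x \<in> A" for x
    using that by (simp add: pmarg_def data_transform_def mult.assoc)
  have "marg_lik \<Theta> (data_transform \<phi> A p) \<pi> (map \<phi> xs) = (\<Prod>x\<leftarrow>xs. jac (\<phi> x)) * marg_lik \<Theta> p \<pi> xs"
    using assms by (induction xs) (auto simp: marg_lik_def pmarg_eq)
  moreover have "0 < (\<Prod>x\<leftarrow>xs. jac (\<phi> x))"
    using assms by (induction xs) (auto intro!: mult_pos_pos jac_pos \<phi>_in)
  ultimately show ?thesis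
    by (auto simp: log_marg_lik_def zero_less_mult_iff ln_mult)
qed

lemma mmi_objective_data_transform:
  assumes "set xs \<subseteq> A"
  shows "mmi_objective B \<Theta> (data_transform \<phi> A p) (map \<phi> xs) \<gamma> k \<pi>
    = mmi_objective A \<Theta> p xs \<gamma> k \<pi> + ereal (ln (\<Prod>x\<leftarrow>xs. jac (\<phi> x)))"
  unfolding mmi_objective_def log_marg_lik_data_transform[OF assms] exp_info_data_transform
  by (simp add: ac_simps)

lemma emp_ref_prior_data_transform_iff:
  assumes "set xs \<subseteq> A"
  shows "emp_ref_prior A \<Theta> p P xs \<gamma> \<pi> \<longleftrightarrow> emp_ref_prior B \<Theta> (data_transform \<phi> A p) P (map \<phi> xs) \<gamma> \<pi>"
proof -
  have shift_cancel: "(a + ereal c) - (b + ereal c) = a - b" for a b :: ereal and c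
    by (cases a; cases b) simp_all
  show ?thesis
    unfolding emp_ref_prior_def mmi_objective_data_transform[OF assms] shift_cancel ..
qed

end

theorem theorem3:
  fixes X :: "(real^'n) set" and \<Theta> :: "(real^'d) set"
    and p :: "real^'n \<Rightarrow> real^'d \<Rightarrow> real"
    and P :: "(real^'d \<Rightarrow> real) set" and xs :: "(real^'n) list" and \<gamma> :: real
  assumes model: "is_model X \<Theta> p"
    and priors_on_\<Theta>: "\<forall>\<pi>\<in>P. \<forall>\<theta>. \<theta> \<notin> \<Theta> \<longrightarrow> \<pi> \<theta> = 0"
    and data: "set xs \<subseteq> X"
    and gamma: "\<gamma> > 0"
  shows
    "(\<forall>(\<phi> :: real^'d \<Rightarrow> real^'d) \<Theta>'. diffeo_on \<phi> \<Theta> \<Theta>' \<longrightarrow>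
        (\<forall>\<pi>. (\<forall>\<theta>. \<theta> \<notin> \<Theta> \<longrightarrow> \<pi> \<theta> = 0) \<longrightarrow>
           (emp_ref_prior X \<Theta> p P xs \<gamma> \<pi> \<longleftrightarrow>
            emp_ref_prior X \<Theta>' (param_transform \<phi> \<Theta> p) (push_density \<phi> \<Theta> ` P) xs \<gamma>
              (push_density \<phi> \<Theta> \<pi>))))
   \<and> (\<forall>(\<psi> :: real^'n \<Rightarrow> real^'n) X'. diffeo_on \<psi> X X' \<longrightarrow>
        (\<forall>\<pi>. emp_ref_prior X \<Theta> p P xs \<gamma> \<pi> \<longleftrightarrow>
             emp_ref_prior X' \<Theta> (data_transform \<psi> X p) P (map \<psi> xs) \<gamma> \<pi>))"
  using diffeo.emp_ref_prior_param_transform_iff[unfolded diffeo_def, OF _ priors_on_\<Theta>]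
    diffeo.emp_ref_prior_data_transform_iff[unfolded diffeo_def, OF _ data]
  by blast

end
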